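(* Let $N\ge1$, let $d_1,\dots,d_N$ be positive integers, and for each $l$ fix a basis $\{\mathbf{G}^{(l)}_i\}_{i=0}^{d_l^2-1}$ of the complex $d_l\times d_l$ matrices with $\mathbf{G}^{(l)}_0=\mathbf{I}_{d_l}$, $\mathrm{Tr}(\mathbf{G}^{(l)}_i)=0$ and $\mathrm{Tr}\big((\mathbf{G}^{(l)}_i)^\dagger\mathbf{G}^{(l)}_{i'}\big)=\kappa_l\delta_{ii'}$ for $i,i'\ge1$, where $\kappa_l\ge1$. For every quantum state $\rho$ on $\mathbb{C}^{d_1}\otimes\cdots\otimes\mathbb{C}^{d_N}$, its correlation tensor $\mathcal{T}^{(1\cdots N)}\in\mathbb{C}^{(d_1^2-1)\times\cdots\times(d_N^2-1)}$, with entries $t^{(1\cdots N)}_{i_1\cdots i_N}=\frac{d_1\cdots d_N}{\kappa_1\cdots\kappa_N}\mathrm{Tr}\big(\rho\,(\mathbf{G}^{(1)}_{i_1}\otimes\cdots\otimes\mathbf{G}^{(N)}_{i_N})\big)$ ($i_l\in\{1,\dots,d_l^2-1\}$), satisfies $\|\mathcal{T}^{(1\cdots N)}\|_F^2\le\mathfrak{m}^{(1\cdots N)}$, where, with $D=d_1\cdots d_N$, $K=\kappa_1\cdots\kappa_N$ and $d=\max_{l}d_l$, $$\mathfrak{m}^{(1\cdots N)}=\begin{cases}\frac{d_1^2-d_1}{\kappa_1}, & N=1,\\[2pt] \frac{D}{K}\Big(D+\frac{1}{N-1}-\frac{D}{N-1}\sum_{l=1}^N\frac{1}{d_l^2}\Big),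 & N=2,\ \text{or } N\ge3 \text{ and } \frac{D}{d^2}<1,\\[2pt] \frac{D}{K}\Big(D+\frac{2}{N-2}-\frac{D}{N-2}\sum_{l=1}^N\frac{1}{d_l^2}\Big), & N\ge3 \text{ and } \frac{D}{d^2}\ge1.\end{cases}$$
   Context: A quantum state is a positive semidefinite trace-one matrix. $\|\cdot\|_F$ is the Frobenius norm (square root of the sum of squared moduli of all entries). *)

theory Defs
  imports "HOL-Analysis.Analysis"
begin

text \<open>Composite system C^{d_0} x ... x C^{d_{N-1}} (parties indexed 0..N-1).
  Computational basis indices are functions a with a l < d l for l < N
  (extensional outside {..<N}).\<close>
definition idx :: "nat \<Rightarrow> (nat \<Rightarrow> nat) \<Rightarrow> (nat \<Rightarrow> nat) set" where
  "idx N d = PiE {..<N} (\<lambda>l. {..<d l})"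

definition quantum_state :: "nat \<Rightarrow> (nat \<Rightarrow> nat) \<Rightarrow> ((nat \<Rightarrow> nat) \<Rightarrow> (nat \<Rightarrow> nat) \<Rightarrow> complex) \<Rightarrow> bool" where
  "quantum_state N d \<rho> \<longleftrightarrow>
     (\<forall>v :: (nat \<Rightarrow> nat) \<Rightarrow> complex.
        let s = (\<Sum>a\<in>idx N d. \<Sum>b\<in>idx N d. cnj (v a) * \<rho> a b * v b) in Im s = 0 \<and> Re s \<ge> 0)
   \<and> (\<Sum>a\<in>idx N d. \<rho> a a) = 1"

definition gen_basis :: "nat \<Rightarrow> real \<Rightarrow> (nat \<Rightarrow> nat \<Rightarrow> nat \<Rightarrow> complex) \<Rightarrow> bool" where
  "gen_basis n \<kappa> G \<longleftrightarrow>
     (\<forall>c :: nat \<Rightarrow> complex.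
        (\<forall>a<n. \<forall>b<n. (\<Sum>i<n\<^sup>2. c i * G i a b) = 0) \<longrightarrow> (\<forall>i<n\<^sup>2. c i = 0))
   \<and> (\<forall>a<n. \<forall>b<n. G 0 a b = (if a = b then 1 else 0))
   \<and> (\<forall>i. 1 \<le> i \<and> i < n\<^sup>2 \<longrightarrow> (\<Sum>a<n. G i a a) = 0)
   \<and> (\<forall>i i'. 1 \<le> i \<and> i < n\<^sup>2 \<and> 1 \<le> i' \<and> i' < n\<^sup>2 \<longrightarrow>
        (\<Sum>a<n. \<Sum>b<n. cnj (G i b a) * G i' b a) = (if i = i' then complex_of_real \<kappa> else 0))"

definition corr_entry ::
  "nat \<Rightarrow> (nat \<Rightarrow> nat) \<Rightarrow> (nat \<Rightarrow> real) \<Rightarrow> (nat \<Rightarrow> nat \<Rightarrow> nat \<Rightarrow> nat \<Rightarrow> complex)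
   \<Rightarrow> ((nat \<Rightarrow> nat) \<Rightarrow> (nat \<Rightarrow> nat) \<Rightarrow> complex) \<Rightarrow> (nat \<Rightarrow> nat) \<Rightarrow> complex" where
  "corr_entry N d \<kappa> G \<rho> i =
     complex_of_real ((\<Prod>l<N. real (d l)) / (\<Prod>l<N. \<kappa> l)) *
     (\<Sum>a\<in>idx N d. \<Sum>b\<in>idx N d. \<rho> a b * (\<Prod>l<N. G l (i l) (b l) (a l)))"

definition corr_idx :: "nat \<Rightarrow> (nat \<Rightarrow> nat) \<Rightarrow> (nat \<Rightarrow> nat) set" where
  "corr_idx N d = PiE {..<N} (\<lambda>l. {1..<(d l)\<^sup>2})"

definition frob_sq_corr ::
  "nat \<Rightarrow> (nat \<Rightarrow> nat) \<Rightarrow> (nat \<Rightarrow> real) \<Rightarrow> (nat \<Rightarrow> nat \<Rightarrow> nat \<Rightarrow> nat \<Rightarrow> complex)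
   \<Rightarrow> ((nat \<Rightarrow> nat) \<Rightarrow> (nat \<Rightarrow> nat) \<Rightarrow> complex) \<Rightarrow> real" where
  "frob_sq_corr N d \<kappa> G \<rho> = (\<Sum>i\<in>corr_idx N d. (cmod (corr_entry N d \<kappa> G \<rho> i))\<^sup>2)"

definition mbound :: "nat \<Rightarrow> (nat \<Rightarrow> nat) \<Rightarrow> (nat \<Rightarrow> real) \<Rightarrow> real" where
  "mbound N d \<kappa> =
    (let D = (\<Prod>l<N. real (d l)); K = (\<Prod>l<N. \<kappa> l); dm = real (Max (d ` {..<N}));
         S = (\<Sum>l<N. 1 / (real (d l))\<^sup>2) in
     if N = 1 then ((real (d 0))\<^sup>2 - real (d 0)) / \<kappa> 0
     else if N = 2 \<or> (N \<ge> 3 \<and> D / dm\<^sup>2 < 1)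
       then D / K * (D + 1 / (real N - 1) - D / (real N - 1) * S)
     else D / K * (D + 2 / (real N - 2) - D / (real N - 2) * S))"

end

(* For a pure state psi, let x i = |Tr (psi psi^* G_i)|^2 / ||G_i||^2 for every multi-index i,
   zero entries included. Completeness of the local bases shows that the x i supported in a set S
   of parties add up to Tr (rho_S^2) / prod_{l not in S} d_l, where rho_S is the marginal on S,
   while the squared norm of the correlation tensor is D^2 / K times the sum of the x i of full
   support. For a pure state complementary marginals have equal purity and the empty and the full
   marginal both have purity 1; counting how often a multi-index is supported in the complement
   of a single party, or in a single party, turns these identities into linear inequalities that
   give the bound. A mixed state is a sum of unnormalised pure states w_k w_k^* (Gram
   decomposition); the bound for w_k is c ||w_k||^4, so Minkowski's inequality carries it over,
   the ||w_k||^2 summing to 1. *)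

theory Submission
  imports Defs "Jordan_Normal_Form.Determinant"
begin

section \<open>Orthogonal bases of matrix spaces\<close>

definition basis_sqnorm :: "nat \<Rightarrow> real \<Rightarrow> nat \<Rightarrow> real" where
  "basis_sqnorm n \<kappa> j = (if j = 0 then real n else \<kappa>)"

lemma basis_sqnorm_pos: "0 < n \<Longrightarrow> 0 < \<kappa> \<Longrightarrow> 0 < basis_sqnorm n \<kappa> j"
  unfolding basis_sqnorm_def by simp

lemma gen_basis_identity_inner:
  assumes "gen_basis n \<kappa> G"
  shows "(\<Sum>a<n. \<Sum>b<n. cnj (G 0 a b) * M a b) = (\<Sum>a<n. M a a)"
proof -
  have "(\<Sum>a<n. \<Sum>b<n. cnj (G 0 a b) * M a b) = (\<Sum>a<n. \<Sum>b<n. if a = b then M a b else 0)"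
    using assms unfolding gen_basis_def by (intro sum.cong refl) auto
  then show ?thesis by simp
qed

lemma gen_basis_orthogonal:
  assumes gb: "gen_basis n \<kappa> G" and j: "j < n\<^sup>2" and j': "j' < n\<^sup>2"
  shows "(\<Sum>a<n. \<Sum>b<n. cnj (G j a b) * G j' a b)
    = (if j = j' then complex_of_real (basis_sqnorm n \<kappa> j) else 0)"
proof -
  have trace: "(\<Sum>a<n. G i a a) = (if i = 0 then of_nat n else 0)" if "i < n\<^sup>2" for i
    using gb that unfolding gen_basis_def by (cases "i = 0") auto
  consider "j = 0" | "j' = 0" "j \<noteq> 0" | "j \<noteq> 0" "j' \<noteq> 0" by blast
  then show ?thesis
  proof cases
    case 1
    then show ?thesis
      using gen_basis_identity_inner[OF gb] trace[OF j'] by (simp add: basis_sqnorm_def)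
  next
    case 2
    have "(\<Sum>a<n. \<Sum>b<n. cnj (G j a b) * G j' a b) = cnj (\<Sum>a<n. \<Sum>b<n. cnj (G 0 a b) * G j a b)"
      using 2 by (simp add: mult.commute)
    then show ?thesis using 2 gen_basis_identity_inner[OF gb] trace[OF j] by simp
  next
    case 3
    then show ?thesis
      using gb j j' sum.swap[of "\<lambda>a b. cnj (G j a b) * G j' a b"]
      unfolding gen_basis_def basis_sqnorm_def by auto
  qed
qed

lemma pair_code_less:
  fixes a b n :: nat
  assumes "a < n" "b < n"
  shows "a * n + b < n\<^sup>2"
proof -
  have "a * n + b < (a + 1) * n" using assms by simp
  also have "\<dots> \<le> n * n" using assms by (intro mult_right_mono) auto
  finally show ?thesis by (simp add: power2_eq_square)
qed

lemma sum_lessThan_mult_div_mod: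
  fixes n :: nat
  shows "(\<Sum>p<n * n. f (p div n) (p mod n)) = (\<Sum>a<n. \<Sum>b<n. f a b)"
proof -
  have n_pos: "0 < n" if "p < n * n" for p
    using that by (cases n) auto
  have "(\<Sum>p<n * n. f (p div n) (p mod n)) = (\<Sum>(a, b)\<in>{..<n} \<times> {..<n}. f a b)"
    by (rule sum.reindex_bij_witness[where i = "\<lambda>(a, b). a * n + b" and j = "\<lambda>p. (p div n, p mod n)"])
      (auto simp: less_mult_imp_div_less pair_code_less[unfolded power2_eq_square] dest: n_pos)
  then show ?thesis by (simp add: sum.cartesian_product)
qed

(* The matrix with rows G j (indexed by a * n + b) has a right inverse by orthogonality, hence
   also a left inverse, and the left-inverse identity is completeness. *)
lemma gen_basis_complete:
  assumes gb: "gen_basis n \<kappa> G" and \<kappa>: "0 < \<kappa>"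
    and x1: "x1 < n" and x2: "x2 < n" and y1: "y1 < n" and y2: "y2 < n"
  shows "(\<Sum>j<n\<^sup>2. G j x1 x2 * cnj (G j y1 y2) / complex_of_real (basis_sqnorm n \<kappa> j))
    = (if x1 = y1 \<and> x2 = y2 then 1 else 0)"
proof -
  have n: "0 < n" using x1 by simp
  let ?w = "\<lambda>j. complex_of_real (basis_sqnorm n \<kappa> j)"
  define A :: "complex mat" where "A = mat (n\<^sup>2) (n\<^sup>2) (\<lambda>(j, p). G j (p div n) (p mod n))"
  define B :: "complex mat" where "B = mat (n\<^sup>2) (n\<^sup>2) (\<lambda>(p, j). cnj (G j (p div n) (p mod n)) / ?w j)"
  have A: "A \<in> carrier_mat (n\<^sup>2) (n\<^sup>2)" and B: "B \<in> carrier_mat (n\<^sup>2) (n\<^sup>2)"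
    unfolding A_def B_def by auto
  have "A * B = 1\<^sub>m (n\<^sup>2)"
  proof (rule eq_matI)
    fix i j assume "i < dim_row (1\<^sub>m (n\<^sup>2))" "j < dim_col (1\<^sub>m (n\<^sup>2))"
    then have i: "i < n\<^sup>2" and j: "j < n\<^sup>2" by auto
    have "(A * B) $$ (i, j) = (\<Sum>p<n * n. G i (p div n) (p mod n) * (cnj (G j (p div n) (p mod n)) / ?w j))"
      using i j unfolding A_def B_def by (simp add: scalar_prod_def power2_eq_square lessThan_atLeast0)
    also have "\<dots> = (\<Sum>a<n. \<Sum>b<n. G i a b * (cnj (G j a b) / ?w j))"
      by (rule sum_lessThan_mult_div_mod)
    also have "\<dots> = cnj (\<Sum>a<n. \<Sum>b<n. cnj (G i a b) * G j a b) / ?w j"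
      by (simp add: sum_divide_distrib)
    also have "\<dots> = 1\<^sub>m (n\<^sup>2) $$ (i, j)"
      using gen_basis_orthogonal[OF gb i j] basis_sqnorm_pos[OF n \<kappa>, of i] i j by auto
    finally show "(A * B) $$ (i, j) = 1\<^sub>m (n\<^sup>2) $$ (i, j)" .
  qed (auto simp: A_def B_def)
  then have BA: "B * A = 1\<^sub>m (n\<^sup>2)" by (rule mat_mult_left_right_inverse[OF A B])
  have enc: "a * n + b < n\<^sup>2" "(a * n + b) div n = a" "(a * n + b) mod n = b"
    if "a < n" "b < n" for a b
    using that by (auto simp: pair_code_less)
  have "(B * A) $$ (y1 * n + y2, x1 * n + x2)
      = (\<Sum>j<n\<^sup>2. cnj (G j y1 y2) / ?w j * G j x1 x2)"
    using enc[OF y1 y2] enc[OF x1 x2] unfolding A_def B_def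
    by (simp add: scalar_prod_def lessThan_atLeast0)
  moreover have "(B * A) $$ (y1 * n + y2, x1 * n + x2) = (if x1 = y1 \<and> x2 = y2 then 1 else 0)"
    using BA enc[OF y1 y2] enc[OF x1 x2] by (metis index_one_mat(1))
  ultimately show ?thesis by (simp add: ac_simps)
qed

section \<open>Positive semidefinite matrices\<close>

definition quad_form :: "'a set \<Rightarrow> ('a \<Rightarrow> 'a \<Rightarrow> complex) \<Rightarrow> ('a \<Rightarrow> complex) \<Rightarrow> complex" where
  "quad_form X \<rho> v = (\<Sum>a\<in>X. \<Sum>b\<in>X. cnj (v a) * \<rho> a b * v b)"

definition psd :: "'a set \<Rightarrow> ('a \<Rightarrow> 'a \<Rightarrow> complex) \<Rightarrow> bool" where
  "psd X \<rho> \<longleftrightarrow> (\<forall>v. Im (quad_form X \<rho> v) = 0 \<and> 0 \<le> Re (quad_form X \<rho> v))"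

lemma quad_form_restrict:
  assumes "finite X" "S \<subseteq> X" "\<And>a. a \<notin> S \<Longrightarrow> v a = 0"
  shows "quad_form X \<rho> v = quad_form S \<rho> v"
proof -
  have "(\<Sum>b\<in>X. cnj (v a) * \<rho> a b * v b) = (\<Sum>b\<in>S. cnj (v a) * \<rho> a b * v b)" for a
    using assms by (intro sum.mono_neutral_right) auto
  then have "quad_form X \<rho> v = (\<Sum>a\<in>X. \<Sum>b\<in>S. cnj (v a) * \<rho> a b * v b)"
    unfolding quad_form_def by simp
  also have "\<dots> = quad_form S \<rho> v"
    unfolding quad_form_def using assms by (intro sum.mono_neutral_right) auto
  finally show ?thesis .
qed

lemma quad_form_pair:
  assumes "a \<noteq> b" "finite X" "a \<in> X" "b \<in> X"
  shows "quad_form X \<rho> (\<lambda>c. if c = a then s else if c = b then t else 0)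
    = cnj s * \<rho> a a * s + cnj s * \<rho> a b * t + cnj t * \<rho> b a * s + cnj t * \<rho> b b * t"
proof -
  have "quad_form X \<rho> (\<lambda>c. if c = a then s else if c = b then t else 0)
      = quad_form {a, b} \<rho> (\<lambda>c. if c = a then s else if c = b then t else 0)"
    using assms by (intro quad_form_restrict) auto
  then show ?thesis using assms(1) unfolding quad_form_def by simp
qed

lemma psd_diag:
  assumes "finite X" "psd X \<rho>" "a \<in> X"
  shows "Im (\<rho> a a) = 0" "0 \<le> Re (\<rho> a a)"
proof -
  have "quad_form X \<rho> (\<lambda>c. if c = a then 1 else 0) = quad_form {a} \<rho> (\<lambda>c. if c = a then 1 else 0)"
    using assms by (intro quad_form_restrict) auto
  then have "quad_form X \<rho> (\<lambda>c. if c = a then 1 else 0) = \<rho> a a"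
    unfolding quad_form_def by simp
  then show "Im (\<rho> a a) = 0" "0 \<le> Re (\<rho> a a)"
    using assms(2) unfolding psd_def by metis+
qed

lemma psd_hermitian:
  assumes X: "finite X" and psd: "psd X \<rho>" and a: "a \<in> X" and b: "b \<in> X"
  shows "\<rho> b a = cnj (\<rho> a b)"
proof (cases "a = b")
  case True
  then show ?thesis using psd_diag(1)[OF X psd a] by (simp add: complex_eq_iff)
next
  case False
  have real: "Im (quad_form X \<rho> (\<lambda>c. if c = a then s else if c = b then 1 else 0)) = 0" for s
    using psd unfolding psd_def by blast
  have "Im (\<rho> a b) + Im (\<rho> b a) = 0" "Re (\<rho> b a) - Re (\<rho> a b) = 0"
    using real[of 1] real[of "\<i>"] psd_diag(1)[OF X psd a] psd_diag(1)[OF X psd b]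
    unfolding quad_form_pair[OF False X a b] by simp_all
  then show ?thesis by (simp add: complex_eq_iff)
qed

lemma psd_zero_diag_row:
  assumes X: "finite X" and psd: "psd X \<rho>" and x: "x \<in> X" and b: "b \<in> X" and zero: "\<rho> x x = 0"
  shows "\<rho> x b = 0"
proof (rule ccontr)
  let ?c = "\<rho> x b"
  assume c: "?c \<noteq> 0"
  then have bx: "x \<noteq> b" using zero by auto
  define t where "t = (Re (\<rho> b b) + 1) / (2 * (cmod ?c)\<^sup>2)"
  have c2: "?c * cnj ?c = complex_of_real ((cmod ?c)\<^sup>2)"
    by (metis complex_norm_square of_real_power)
  have "quad_form X \<rho> (\<lambda>y. if y = x then - (complex_of_real t * ?c) else if y = b then 1 else 0)
      = \<rho> b b - complex_of_real (2 * t * (cmod ?c)\<^sup>2)"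
    unfolding quad_form_pair[OF bx X x b] psd_hermitian[OF X psd x b] zero
    by (simp add: algebra_simps c2 flip: mult.assoc)
  also have "2 * t * (cmod ?c)\<^sup>2 = Re (\<rho> b b) + 1"
    unfolding t_def using c by simp
  finally have "Re (quad_form X \<rho> (\<lambda>y. if y = x then - (complex_of_real t * ?c) else if y = b then 1 else 0)) = -1"
    by simp
  then show False using psd unfolding psd_def by (metis neg_0_le_iff_le not_one_le_zero)
qed

lemma quad_form_insert:
  fixes v :: "'a \<Rightarrow> complex"
  assumes X: "finite X" "x \<notin> X" and herm: "\<And>a. a \<in> X \<Longrightarrow> \<rho> a x = cnj (\<rho> x a)"
  defines "l \<equiv> (\<Sum>b\<in>X. \<rho> x b * v b)"
  shows "quad_form (insert x X) \<rho> (v(x := s))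
    = cnj s * \<rho> x x * s + cnj s * l + cnj l * s + quad_form X \<rho> v"
proof -
  have v: "\<And>a. a \<in> X \<Longrightarrow> (v(x := s)) a = v a" using X by auto
  have "quad_form (insert x X) \<rho> (v(x := s))
      = (cnj s * \<rho> x x * s + (\<Sum>b\<in>X. cnj s * \<rho> x b * v b))
        + ((\<Sum>a\<in>X. cnj (v a) * \<rho> a x) * s + quad_form X \<rho> v)"
    unfolding quad_form_def using X v
    by (simp add: sum.distrib sum_distrib_left sum_distrib_right algebra_simps cong: sum.cong)
  also have "(\<Sum>a\<in>X. cnj (v a) * \<rho> a x) = cnj l"
    unfolding l_def using herm by (simp add: mult.commute)
  also have "(\<Sum>b\<in>X. cnj s * \<rho> x b * v b) = cnj s * l"
    unfolding l_def by (simp add: sum_distrib_left mult.assoc)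
  finally show ?thesis by (simp add: algebra_simps fun_upd_def)
qed

lemma quad_form_minus_outer:
  fixes v :: "'a \<Rightarrow> complex"
  assumes herm: "\<And>a. a \<in> X \<Longrightarrow> \<rho> a x = cnj (\<rho> x a)"
  defines "l \<equiv> (\<Sum>b\<in>X. \<rho> x b * v b)"
  shows "quad_form X (\<lambda>a b. \<rho> a b - \<rho> a x * \<rho> x b / c) v = quad_form X \<rho> v - cnj l * l / c"
proof -
  have "cnj l = (\<Sum>a\<in>X. cnj (v a) * \<rho> a x)"
    unfolding l_def using herm by (simp add: mult.commute)
  then have "cnj l * l = (\<Sum>a\<in>X. cnj (v a) * \<rho> a x) * (\<Sum>b\<in>X. \<rho> x b * v b)"
    unfolding l_def by simp
  then have "(\<Sum>a\<in>X. \<Sum>b\<in>X. cnj (v a) * \<rho> a x * (\<rho> x b * v b)) = cnj l * l"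
    unfolding sum_product by simp
  moreover have "quad_form X (\<lambda>a b. \<rho> a b - \<rho> a x * \<rho> x b / c) v
      = quad_form X \<rho> v - (\<Sum>a\<in>X. \<Sum>b\<in>X. cnj (v a) * \<rho> a x * (\<rho> x b * v b)) / c"
    unfolding quad_form_def by (simp add: sum_subtractf sum_divide_distrib algebra_simps)
  ultimately show ?thesis by simp
qed

(* If rho x x = 0, the correction term is 0 by the convention z / 0 = 0. *)
lemma psd_schur_complement:
  assumes X: "finite X" "x \<notin> X" and psd: "psd (insert x X) \<rho>"
  shows "psd X (\<lambda>a b. \<rho> a b - \<rho> a x * \<rho> x b / \<rho> x x)"
  unfolding psd_def
proof
  fix v :: "'a \<Rightarrow> complex"
  define l where "l = (\<Sum>b\<in>X. \<rho> x b * v b)"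
  define s where "s = - l / \<rho> x x"
  have finI: "finite (insert x X)" using X by simp
  have herm: "\<And>a. a \<in> X \<Longrightarrow> \<rho> a x = cnj (\<rho> x a)"
    using psd_hermitian[OF finI psd] by blast
  have rxx: "cnj (\<rho> x x) = \<rho> x x"
    using psd_diag(1)[OF finI psd, of x] by (simp add: complex_eq_iff)
  have "cnj s * \<rho> x x * s + cnj s * l + cnj l * s = - cnj l * l / \<rho> x x"
    unfolding s_def using rxx by (cases "\<rho> x x = 0") (simp_all add: field_simps)
  moreover have "quad_form (insert x X) \<rho> (v(x := s))
      = cnj s * \<rho> x x * s + cnj s * l + cnj l * s + quad_form X \<rho> v"
    unfolding l_def by (rule quad_form_insert[OF X]) (fact herm)
  moreover have "quad_form X (\<lambda>a b. \<rho> a b - \<rho> a x * \<rho> x b / \<rho> x x) v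
      = quad_form X \<rho> v - cnj l * l / \<rho> x x"
    unfolding l_def by (rule quad_form_minus_outer) (fact herm)
  ultimately have "quad_form X (\<lambda>a b. \<rho> a b - \<rho> a x * \<rho> x b / \<rho> x x) v
      = quad_form (insert x X) \<rho> (v(x := s))"
    by simp
  then show "Im (quad_form X (\<lambda>a b. \<rho> a b - \<rho> a x * \<rho> x b / \<rho> x x) v) = 0
      \<and> 0 \<le> Re (quad_form X (\<lambda>a b. \<rho> a b - \<rho> a x * \<rho> x b / \<rho> x x) v)"
    using psd unfolding psd_def by simp
qed

lemma psd_pivot_factor:
  assumes X: "finite X" and psd: "psd X \<rho>" and x: "x \<in> X"
  obtains u where "\<And>a b. b \<in> X \<Longrightarrow> u a * cnj (u b) = \<rho> a x * \<rho> x b / \<rho> x x"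
proof
  define r where "r = Re (\<rho> x x)"
  have rxx: "\<rho> x x = complex_of_real r" and r: "0 \<le> r"
    using psd_diag[OF X psd x] unfolding r_def by (simp_all add: complex_eq_iff)
  fix a b assume b: "b \<in> X"
  have "complex_of_real (sqrt r) * complex_of_real (sqrt r) = \<rho> x x"
    unfolding rxx using r by (simp flip: of_real_mult)
  moreover have "cnj (\<rho> b x) = \<rho> x b" using psd_hermitian[OF X psd x b] by simp
  ultimately show "\<rho> a x / complex_of_real (sqrt r) * cnj (\<rho> b x / complex_of_real (sqrt r))
      = \<rho> a x * \<rho> x b / \<rho> x x"
    by (simp add: field_simps)
qed

lemma psd_pivot_entry:
  assumes X: "finite X" and psd: "psd X \<rho>" and a: "a \<in> X" and b: "b \<in> X" and x: "x \<in> X"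
    and ab: "a = x \<or> b = x"
  shows "\<rho> a b = \<rho> a x * \<rho> x b / \<rho> x x"
proof (cases "\<rho> x x = 0")
  case True
  have "\<rho> a b = 0"
    using ab psd_zero_diag_row[OF X psd x _ True] psd_hermitian[OF X psd x a] a b by auto
  then show ?thesis using True by simp
next
  case False
  then show ?thesis using ab by auto
qed

lemma psd_gram_decomposition:
  assumes "finite X" "psd X \<rho>"
  shows "\<exists>w. \<forall>a\<in>X. \<forall>b\<in>X. \<rho> a b = (\<Sum>k\<in>X. w k a * cnj (w k b))"
  using assms
proof (induction X arbitrary: \<rho> rule: finite_induct)
  case empty
  then show ?case by simp
next
  case (insert x X)
  have finI: "finite (insert x X)" using insert.hyps by simp
  obtain w where w: "\<forall>a\<in>X. \<forall>b\<in>X. \<rho> a b - \<rho> a x * \<rho> x b / \<rho> x x = (\<Sum>k\<in>X. w k a * cnj (w k b))"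
    using insert.IH[OF psd_schur_complement[OF insert.hyps insert.prems]] by blast
  obtain u where u: "\<And>a b. b \<in> insert x X \<Longrightarrow> u a * cnj (u b) = \<rho> a x * \<rho> x b / \<rho> x x"
    using psd_pivot_factor[OF finI insert.prems insertI1] by blast
  define w' where "w' k a = (if k = x then u a else if a = x then 0 else w k a)" for k a
  show ?case
  proof (intro exI ballI)
    fix a b assume a: "a \<in> insert x X" and b: "b \<in> insert x X"
    have "(\<Sum>k\<in>X. w' k a * cnj (w' k b))
        = (\<Sum>k\<in>X. (if a = x then 0 else w k a) * cnj (if b = x then 0 else w k b))"
      using insert.hyps(2) unfolding w'_def by (intro sum.cong) auto
    then have "(\<Sum>k\<in>insert x X. w' k a * cnj (w' k b))
        = u a * cnj (u b) + (\<Sum>k\<in>X. (if a = x then 0 else w k a) * cnj (if b = x then 0 else w k b))"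
      using insert.hyps by (simp add: w'_def)
    also have "\<dots> = \<rho> a b"
    proof (cases "a = x \<or> b = x")
      case True
      then show ?thesis
        using u[OF b] psd_pivot_entry[OF finI insert.prems a b insertI1] by auto
    next
      case False
      then have "\<rho> a b - \<rho> a x * \<rho> x b / \<rho> x x = (\<Sum>k\<in>X. w k a * cnj (w k b))"
        using w a b by auto
      then show ?thesis using False u[OF b] by (simp add: algebra_simps)
    qed
    finally show "\<rho> a b = (\<Sum>k\<in>insert x X. w' k a * cnj (w' k b))" by simp
  qed
qed

section \<open>Minkowski's inequality for finite sums\<close>

lemma L2_set_sum_le:
  assumes "finite K"
  shows "L2_set (\<lambda>i. \<Sum>k\<in>K. f k i) A \<le> (\<Sum>k\<in>K. L2_set (f k) A)"
  using assms
proof (induction K rule: finite_induct)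
  case empty
  then show ?case by (simp add: L2_set_0')
next
  case (insert x K)
  have "L2_set (\<lambda>i. \<Sum>k\<in>insert x K. f k i) A = L2_set (\<lambda>i. f x i + (\<Sum>k\<in>K. f k i)) A"
    using insert.hyps by simp
  also have "\<dots> \<le> L2_set (f x) A + L2_set (\<lambda>i. \<Sum>k\<in>K. f k i) A"
    by (rule L2_set_triangle_ineq)
  also have "\<dots> \<le> (\<Sum>k\<in>insert x K. L2_set (f k) A)"
    using insert by simp
  finally show ?case .
qed

lemma sum_sq_norm_convex_bound:
  fixes v :: "'k \<Rightarrow> 'i \<Rightarrow> 'a :: real_normed_vector"
  assumes K: "finite K" and bound: "\<And>k. k \<in> K \<Longrightarrow> (\<Sum>i\<in>A. (norm (v k i))\<^sup>2) \<le> c * (t k)\<^sup>2"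
    and t: "\<And>k. k \<in> K \<Longrightarrow> 0 \<le> t k" and t_sum: "(\<Sum>k\<in>K. t k) = 1"
  shows "(\<Sum>i\<in>A. (norm (\<Sum>k\<in>K. v k i))\<^sup>2) \<le> c"
proof -
  obtain k0 where k0: "k0 \<in> K" "0 < t k0"
  proof (rule ccontr)
    assume "\<not> thesis"
    then have "(\<Sum>k\<in>K. t k) \<le> 0" using that by (intro sum_nonpos) force
    with t_sum show False by simp
  qed
  have "0 \<le> (\<Sum>i\<in>A. (norm (v k0 i))\<^sup>2)" by (simp add: sum_nonneg)
  also have "\<dots> \<le> c * (t k0)\<^sup>2" by (rule bound[OF k0(1)])
  finally have c: "0 \<le> c" using k0 by (simp add: zero_le_mult_iff)
  have single: "L2_set (\<lambda>i. norm (v k i)) A \<le> sqrt c * t k" if "k \<in> K" for k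
  proof -
    have "L2_set (\<lambda>i. norm (v k i)) A \<le> sqrt (c * (t k)\<^sup>2)"
      unfolding L2_set_def using bound[OF that] by simp
    also have "\<dots> = sqrt c * t k" using t[OF that] by (simp add: real_sqrt_mult)
    finally show ?thesis .
  qed
  have "L2_set (\<lambda>i. norm (\<Sum>k\<in>K. v k i)) A \<le> L2_set (\<lambda>i. \<Sum>k\<in>K. norm (v k i)) A"
    by (rule L2_set_mono) (auto intro: norm_sum)
  also have "\<dots> \<le> (\<Sum>k\<in>K. L2_set (\<lambda>i. norm (v k i)) A)"
    by (rule L2_set_sum_le[OF K])
  also have "\<dots> \<le> (\<Sum>k\<in>K. sqrt c * t k)"
    by (rule sum_mono) (rule single)
  also have "\<dots> = sqrt c"
    using t_sum by (simp add: sum_distrib_left[symmetric])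
  finally show ?thesis unfolding L2_set_def by simp
qed

section \<open>Masses of supports\<close>

lemma real_card_Diff:
  assumes "finite L" "T \<subseteq> L"
  shows "real (card (L - T)) = real (card L) - real (card T)"
  using assms by (simp add: card_Diff_subset finite_subset card_mono of_nat_diff)

(* Pointwise forms of the inequalities between masses below, T being the support of one
   multi-index. *)
lemma card_diff_le_of_bool:
  fixes L T :: "'a set"
  assumes "finite L" "T \<subseteq> L"
  shows "real (card (L - T)) - of_bool (T = {}) \<le> (real (card L) - 1) * of_bool (T \<noteq> L)"
proof (cases "T = {} \<or> T = L")
  case True
  then show ?thesis using assms by auto
next
  case False
  then have "card T \<ge> 1" using assms
    by (metis One_nat_def Suc_leI card_gt_0_iff finite_subset)
  then show ?thesis using False real_card_Diff[OF assms] by simp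
qed

lemma card_diff_singletons_le_of_bool:
  fixes L T :: "'a set"
  assumes "finite L" "T \<subseteq> L"
  shows "real (card (L - T)) - real (card {l\<in>L. T \<subseteq> {l}}) + (real (card L) - 2) * of_bool (T = {})
    \<le> (real (card L) - 2) * of_bool (T \<noteq> L)"
proof -
  have fin: "finite T" using assms finite_subset by blast
  consider "T = {}" | "T = L" | l where "T = {l}" "T \<noteq> L" | "card T \<ge> 2" "T \<noteq> L" "T \<noteq> {}"
  proof -
    have "card T = 0 \<or> card T = 1 \<or> card T \<ge> 2" by linarith
    then show thesis
      using that fin by (metis card_0_eq card_1_singletonE)
  qed
  then show ?thesis
  proof cases
    case 1
    then show ?thesis using assms by auto
  next
    case 2
    then show ?thesis by simp
  next
    case 3
    then have "{l\<in>L. T \<subseteq> {l}} = {l}" using assms by auto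
    then show ?thesis using 3 real_card_Diff[OF assms] by simp
  next
    case 4
    then show ?thesis using real_card_Diff[OF assms] by simp
  qed
qed

locale support_weights =
  fixes L :: "'p set" and I :: "'i set" and supp :: "'i \<Rightarrow> 'p set" and x :: "'i \<Rightarrow> real"
  assumes finite_parties: "finite L" and finite_index: "finite I"
    and supp_subset: "\<And>i. i \<in> I \<Longrightarrow> supp i \<subseteq> L"
    and weight_nonneg: "\<And>i. i \<in> I \<Longrightarrow> 0 \<le> x i"
begin

definition mass :: "'p set \<Rightarrow> real" where
  "mass S = (\<Sum>i\<in>{i\<in>I. supp i \<subseteq> S}. x i)"

definition full_mass :: real where
  "full_mass = (\<Sum>i\<in>{i\<in>I. supp i = L}. x i)"

lemma mass_eq_sum_of_bool: "mass S = (\<Sum>i\<in>I. of_bool (supp i \<subseteq> S) * x i)"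
  unfolding mass_def sum.inter_filter[OF finite_index] by (intro sum.cong) auto

lemma full_mass_eq_sum_of_bool: "full_mass = (\<Sum>i\<in>I. of_bool (supp i = L) * x i)"
  unfolding full_mass_def sum.inter_filter[OF finite_index] by (intro sum.cong) auto

lemma mass_mono: "S \<subseteq> T \<Longrightarrow> mass S \<le> mass T"
  unfolding mass_def by (rule sum_mono2) (use finite_index weight_nonneg in auto)

lemma mass_all_minus_full: "mass L - full_mass = (\<Sum>i\<in>I. of_bool (supp i \<noteq> L) * x i)"
  unfolding mass_eq_sum_of_bool full_mass_eq_sum_of_bool sum_subtractf[symmetric]
  by (rule sum.cong) (use supp_subset in auto)

lemma sum_mass: "(\<Sum>l\<in>L. mass (F l)) = (\<Sum>i\<in>I. real (card {l\<in>L. supp i \<subseteq> F l}) * x i)"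
proof -
  have "(\<Sum>l\<in>L. mass (F l)) = (\<Sum>i\<in>I. \<Sum>l\<in>L. of_bool (supp i \<subseteq> F l) * x i)"
    unfolding mass_eq_sum_of_bool by (rule sum.swap)
  also have "\<dots> = (\<Sum>i\<in>I. real (card {l\<in>L. supp i \<subseteq> F l}) * x i)"
    using finite_parties by (simp add: sum_distrib_right[symmetric] Int_def)
  finally show ?thesis .
qed

lemma sum_mass_delete: "(\<Sum>l\<in>L. mass (L - {l})) = (\<Sum>i\<in>I. real (card (L - supp i)) * x i)"
  unfolding sum_mass
proof (rule sum.cong)
  fix i assume "i \<in> I"
  then have "{l\<in>L. supp i \<subseteq> L - {l}} = L - supp i" using supp_subset by auto
  then show "real (card {l\<in>L. supp i \<subseteq> L - {l}}) * x i = real (card (L - supp i)) * x i" by simp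
qed simp

lemma mass_empty_le: "L \<noteq> {} \<Longrightarrow> mass {} \<le> mass L - full_mass"
  unfolding mass_all_minus_full mass_eq_sum_of_bool[of "{}"]
  by (rule sum_mono) (use weight_nonneg in auto)

lemma mass_delete_ineq:
  "(\<Sum>l\<in>L. mass (L - {l})) - mass {} \<le> (real (card L) - 1) * (mass L - full_mass)"
proof -
  have "(\<Sum>l\<in>L. mass (L - {l})) - mass {}
      = (\<Sum>i\<in>I. (real (card (L - supp i)) - of_bool (supp i = {})) * x i)"
    unfolding sum_mass_delete mass_eq_sum_of_bool[of "{}"]
    by (simp add: sum_subtractf left_diff_distrib)
  also have "\<dots> \<le> (\<Sum>i\<in>I. (real (card L) - 1) * of_bool (supp i \<noteq> L) * x i)"
    by (intro sum_mono mult_right_mono card_diff_le_of_bool finite_parties supp_subset weight_nonneg)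
  also have "\<dots> = (real (card L) - 1) * (mass L - full_mass)"
    unfolding mass_all_minus_full by (simp add: sum_distrib_left mult.assoc)
  finally show ?thesis .
qed

lemma mass_delete_singleton_ineq:
  "(\<Sum>l\<in>L. mass (L - {l})) - (\<Sum>l\<in>L. mass {l}) + (real (card L) - 2) * mass {}
    \<le> (real (card L) - 2) * (mass L - full_mass)"
proof -
  have "(\<Sum>l\<in>L. mass (L - {l})) - (\<Sum>l\<in>L. mass {l}) + (real (card L) - 2) * mass {}
      = (\<Sum>i\<in>I. (real (card (L - supp i)) - real (card {l\<in>L. supp i \<subseteq> {l}})
          + (real (card L) - 2) * of_bool (supp i = {})) * x i)"
    unfolding sum_mass_delete sum_mass[of "\<lambda>l. {l}"] mass_eq_sum_of_bool[of "{}"]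
    by (simp add: sum_subtractf sum.distrib sum_distrib_left algebra_simps)
  also have "\<dots> \<le> (\<Sum>i\<in>I. (real (card L) - 2) * of_bool (supp i \<noteq> L) * x i)"
    by (intro sum_mono mult_right_mono card_diff_singletons_le_of_bool finite_parties supp_subset
        weight_nonneg)
  also have "\<dots> = (real (card L) - 2) * (mass L - full_mass)"
    unfolding mass_all_minus_full by (simp add: sum_distrib_left mult.assoc)
  finally show ?thesis .
qed

end

lemma rearrange_bound:
  fixes k D q S F c :: real
  assumes k: "0 < k" and D: "0 < D" and le: "q * S - c * (q / D) \<le> k * (q - F)"
  shows "D * F \<le> (D + c / k - D / k * S) * q"
proof -
  have "D / k * (q * S - c * (q / D)) \<le> D / k * (k * (q - F))"
    using le k D by (intro mult_left_mono) auto
  moreover have "D / k * (q * S - c * (q / D)) = D / k * S * q - c / k * q"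
    using D k by (simp add: field_simps)
  moreover have "D / k * (k * (q - F)) = D * q - D * F"
    using k by (simp add: field_simps)
  ultimately show ?thesis by (simp add: ring_distribs)
qed

(* Read mass S * prod dim (L - S) as the purity Tr (rho_S^2) of the marginal on S of an
   unnormalised pure state rho with Tr (rho^2) = q: the empty and the full marginal have purity q,
   and complementary marginals have equal purity. *)
locale marginal_masses = support_weights L I supp x
  for L :: "'p set" and I :: "'i set" and supp :: "'i \<Rightarrow> 'p set" and x :: "'i \<Rightarrow> real" +
  fixes dim :: "'p \<Rightarrow> real" and q :: real
  assumes dim_pos: "\<And>l. l \<in> L \<Longrightarrow> 0 < dim l"
    and mass_all: "mass L = q"
    and mass_empty: "mass {} = q / prod dim L"
    and mass_delete: "\<And>l. l \<in> L \<Longrightarrow> mass (L - {l}) * (dim l)\<^sup>2 = mass {l} * prod dim L"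
begin

lemma prod_dim_pos: "0 < prod dim L"
  using dim_pos by (rule prod_pos)

lemma mass_delete_lower:
  assumes l: "l \<in> L"
  shows "q / (dim l)\<^sup>2 \<le> mass (L - {l})"
proof -
  have "q = mass {} * prod dim L" using mass_empty prod_dim_pos by simp
  also have "\<dots> \<le> mass {l} * prod dim L"
    using mass_mono[of "{}" "{l}"] prod_dim_pos by (intro mult_right_mono) auto
  also have "\<dots> = mass (L - {l}) * (dim l)\<^sup>2" using mass_delete[OF l] by simp
  finally show ?thesis using dim_pos[OF l] by (simp add: field_simps)
qed

lemma mass_delete_minus_singleton_lower:
  assumes l: "l \<in> L" and dim_le: "(dim l)\<^sup>2 \<le> prod dim L"
  shows "q / (dim l)\<^sup>2 - q / prod dim L \<le> mass (L - {l}) - mass {l}"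
proof -
  have d2: "0 < (dim l)\<^sup>2" using dim_pos[OF l] by simp
  have ratio: "0 \<le> prod dim L / (dim l)\<^sup>2 - 1" using dim_le d2 by (simp add: field_simps)
  have "q / (dim l)\<^sup>2 - q / prod dim L = mass {} * (prod dim L / (dim l)\<^sup>2 - 1)"
    using mass_empty prod_dim_pos d2 by (simp add: field_simps)
  also have "\<dots> \<le> mass {l} * (prod dim L / (dim l)\<^sup>2 - 1)"
    using mass_mono[of "{}" "{l}"] ratio by (intro mult_right_mono) auto
  also have "\<dots> = mass (L - {l}) - mass {l}"
    using mass_delete[OF l] d2 by (simp add: field_simps)
  finally show ?thesis .
qed

lemma full_mass_bound_empty:
  assumes "L \<noteq> {}"
  shows "prod dim L * full_mass \<le> (prod dim L - 1) * q"
  using mass_empty_le[OF assms] mass_empty mass_all prod_dim_pos by (simp add: field_simps)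

lemma full_mass_bound_delete:
  assumes n: "2 \<le> card L"
  defines "n \<equiv> real (card L)" and "D \<equiv> prod dim L"
  shows "D * full_mass \<le> (D + 1 / (n - 1) - D / (n - 1) * (\<Sum>l\<in>L. 1 / (dim l)\<^sup>2)) * q"
proof -
  have n1: "0 < n - 1" using n unfolding n_def by simp
  have "q * (\<Sum>l\<in>L. 1 / (dim l)\<^sup>2) \<le> (\<Sum>l\<in>L. mass (L - {l}))"
    unfolding sum_distrib_left by (rule sum_mono) (use mass_delete_lower in simp)
  then have "q * (\<Sum>l\<in>L. 1 / (dim l)\<^sup>2) - 1 * (q / D) \<le> (n - 1) * (q - full_mass)"
    using mass_delete_ineq unfolding mass_all mass_empty n_def D_def by linarith
  then show ?thesis
    using rearrange_bound[of "n - 1" D] n1 prod_dim_pos unfolding D_def by simp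
qed

lemma full_mass_bound_delete_singleton:
  assumes n: "3 \<le> card L" and dim_le: "\<And>l. l \<in> L \<Longrightarrow> (dim l)\<^sup>2 \<le> prod dim L"
  defines "n \<equiv> real (card L)" and "D \<equiv> prod dim L"
  shows "D * full_mass \<le> (D + 2 / (n - 2) - D / (n - 2) * (\<Sum>l\<in>L. 1 / (dim l)\<^sup>2)) * q"
proof -
  have n2: "0 < n - 2" using n unfolding n_def by simp
  have "q * (\<Sum>l\<in>L. 1 / (dim l)\<^sup>2) - n * (q / D) = (\<Sum>l\<in>L. q / (dim l)\<^sup>2 - q / D)"
    unfolding n_def by (simp add: sum_subtractf sum_distrib_left)
  also have "\<dots> \<le> (\<Sum>l\<in>L. mass (L - {l}) - mass {l})"
    unfolding D_def by (intro sum_mono mass_delete_minus_singleton_lower dim_le)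
  finally have "q * (\<Sum>l\<in>L. 1 / (dim l)\<^sup>2) - n * (q / D)
      \<le> (\<Sum>l\<in>L. mass (L - {l})) - (\<Sum>l\<in>L. mass {l})"
    by (simp add: sum_subtractf)
  then have "q * (\<Sum>l\<in>L. 1 / (dim l)\<^sup>2) - 2 * (q / D) \<le> (n - 2) * (q - full_mass)"
    using mass_delete_singleton_ineq unfolding mass_all mass_empty n_def D_def
    by (simp add: algebra_simps)
  then show ?thesis
    using rearrange_bound[of "n - 2" D] n2 prod_dim_pos unfolding D_def by simp
qed

end

section \<open>Pure states\<close>

lemma prod_of_bool:
  assumes "finite A"
  shows "(\<Prod>x\<in>A. of_bool (P x) :: 'a :: comm_semiring_1) = of_bool (\<forall>x\<in>A. P x)"
proof (cases "\<forall>x\<in>A. P x")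
  case False
  then obtain x where "x \<in> A" "\<not> P x" by blast
  then show ?thesis using assms by (simp add: prod_zero)
qed simp

lemma sum_swap_outer4:
  "(\<Sum>i\<in>A. \<Sum>a\<in>B. \<Sum>b\<in>B. \<Sum>a'\<in>B. \<Sum>b'\<in>B. f i a b a' b')
    = (\<Sum>a\<in>B. \<Sum>b\<in>B. \<Sum>a'\<in>B. \<Sum>b'\<in>B. \<Sum>i\<in>A. f i a b a' b')"
  by (subst sum.swap, intro sum.cong refl)+

lemma sum_of_bool_delta:
  fixes f :: "'a \<Rightarrow> 'b :: semiring_1"
  assumes "finite A" "x \<in> A"
  shows "(\<Sum>y\<in>A. of_bool (y = x) * f y) = f x"
proof -
  have "(\<Sum>y\<in>A. of_bool (y = x) * f y) = (\<Sum>y\<in>A. if y = x then f y else 0)"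
    by (intro sum.cong) auto
  then show ?thesis using assms by simp
qed

lemma idx_eq_iff: "a \<in> idx N d \<Longrightarrow> b \<in> idx N d \<Longrightarrow> (\<forall>m<N. a m = b m) \<longleftrightarrow> a = b"
  unfolding idx_def by (metis PiE_ext lessThan_iff)

lemma finite_idx: "finite (idx N d)"
  unfolding idx_def by (simp add: finite_PiE)

lemma idx_less: "a \<in> idx N d \<Longrightarrow> l < N \<Longrightarrow> a l < d l"
  unfolding idx_def by auto

definition ket_bra :: "('a \<Rightarrow> complex) \<Rightarrow> 'a \<Rightarrow> 'a \<Rightarrow> complex" where
  "ket_bra \<psi> a b = \<psi> a * cnj (\<psi> b)"

definition mbound_factor :: "nat \<Rightarrow> (nat \<Rightarrow> nat) \<Rightarrow> real" where
  "mbound_factor N d =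
    (let D = (\<Prod>l<N. real (d l)); dm = real (Max (d ` {..<N})); S = (\<Sum>l<N. 1 / (real (d l))\<^sup>2) in
     if N = 1 then D - 1
     else if N = 2 \<or> (N \<ge> 3 \<and> D / dm\<^sup>2 < 1) then D + 1 / (real N - 1) - D / (real N - 1) * S
     else D + 2 / (real N - 2) - D / (real N - 2) * S)"

lemma mbound_eq: "mbound N d \<kappa> = (\<Prod>l<N. real (d l)) / (\<Prod>l<N. \<kappa> l) * mbound_factor N d"
proof (cases "N = 1")
  case True
  then show ?thesis unfolding mbound_def mbound_factor_def by (simp add: power2_eq_square field_simps)
next
  case False
  then show ?thesis unfolding mbound_def mbound_factor_def Let_def by simp
qed

locale product_basis =
  fixes N :: nat and d :: "nat \<Rightarrow> nat" and \<kappa> :: "nat \<Rightarrow> real"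
    and G :: "nat \<Rightarrow> nat \<Rightarrow> nat \<Rightarrow> nat \<Rightarrow> complex"
  assumes dim_pos: "\<And>l. l < N \<Longrightarrow> 0 < d l"
    and \<kappa>_pos: "\<And>l. l < N \<Longrightarrow> 0 < \<kappa> l"
    and basis: "\<And>l. l < N \<Longrightarrow> gen_basis (d l) (\<kappa> l) (G l)"
begin

definition tr_basis :: "((nat \<Rightarrow> nat) \<Rightarrow> (nat \<Rightarrow> nat) \<Rightarrow> complex) \<Rightarrow> (nat \<Rightarrow> nat) \<Rightarrow> complex" where
  "tr_basis \<rho> i = (\<Sum>a\<in>idx N d. \<Sum>b\<in>idx N d. \<rho> a b * (\<Prod>l<N. G l (i l) (b l) (a l)))"

definition basis_weight :: "(nat \<Rightarrow> nat) \<Rightarrow> real" where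
  "basis_weight i = (\<Prod>l<N. basis_sqnorm (d l) (\<kappa> l) (i l))"

definition supported_idx :: "nat set \<Rightarrow> (nat \<Rightarrow> nat) set" where
  "supported_idx S = PiE {..<N} (\<lambda>l. if l \<in> S then {..<(d l)\<^sup>2} else {0})"

(* The squared Frobenius norm of the partial trace of rho onto the parties in S. *)
definition reduced_purity :: "((nat \<Rightarrow> nat) \<Rightarrow> (nat \<Rightarrow> nat) \<Rightarrow> complex) \<Rightarrow> nat set \<Rightarrow> complex" where
  "reduced_purity \<rho> S = (\<Sum>a\<in>idx N d. \<Sum>b\<in>idx N d. \<Sum>a'\<in>idx N d. \<Sum>b'\<in>idx N d.
     \<rho> a b * cnj (\<rho> a' b') *
     (\<Prod>m<N. if m \<in> S then of_bool (b m = b' m \<and> a m = a' m) else of_bool (b m = a m \<and> b' m = a' m)))"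

lemma basis_weight_pos: "0 < basis_weight i"
  unfolding basis_weight_def using dim_pos \<kappa>_pos by (intro prod_pos basis_sqnorm_pos) auto

lemma cmod_tr_basis_sq:
  "complex_of_real ((cmod (tr_basis \<rho> i))\<^sup>2) =
   (\<Sum>a\<in>idx N d. \<Sum>b\<in>idx N d. \<Sum>a'\<in>idx N d. \<Sum>b'\<in>idx N d.
      \<rho> a b * cnj (\<rho> a' b') * (\<Prod>l<N. G l (i l) (b l) (a l) * cnj (G l (i l) (b' l) (a' l))))"
proof -
  have "complex_of_real ((cmod (tr_basis \<rho> i))\<^sup>2) = tr_basis \<rho> i * cnj (tr_basis \<rho> i)"
    by (metis complex_norm_square of_real_power)
  also have "\<dots> = (\<Sum>a\<in>idx N d. \<Sum>b\<in>idx N d. \<rho> a b * (\<Prod>l<N. G l (i l) (b l) (a l)))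
      * (\<Sum>a'\<in>idx N d. \<Sum>b'\<in>idx N d. cnj (\<rho> a' b') * (\<Prod>l<N. cnj (G l (i l) (b' l) (a' l))))"
    unfolding tr_basis_def by (simp add: cnj_sum cnj_prod)
  also have "\<dots> = (\<Sum>a\<in>idx N d. \<Sum>b\<in>idx N d. \<Sum>a'\<in>idx N d. \<Sum>b'\<in>idx N d.
      (\<rho> a b * (\<Prod>l<N. G l (i l) (b l) (a l))) * (cnj (\<rho> a' b') * (\<Prod>l<N. cnj (G l (i l) (b' l) (a' l)))))"
    by (simp only: sum_distrib_right, simp only: sum_distrib_left)
  also have "\<dots> = (\<Sum>a\<in>idx N d. \<Sum>b\<in>idx N d. \<Sum>a'\<in>idx N d. \<Sum>b'\<in>idx N d.
      \<rho> a b * cnj (\<rho> a' b') * (\<Prod>l<N. G l (i l) (b l) (a l) * cnj (G l (i l) (b' l) (a' l))))"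
    by (simp add: prod.distrib mult_ac)
  finally show ?thesis .
qed

lemma sum_party_kernel:
  assumes l: "l < N" and a: "a \<in> idx N d" and b: "b \<in> idx N d" and a': "a' \<in> idx N d" and b': "b' \<in> idx N d"
  shows "(\<Sum>j\<in>(if l \<in> S then {..<(d l)\<^sup>2} else {0}).
            G l j (b l) (a l) * cnj (G l j (b' l) (a' l)) / complex_of_real (basis_sqnorm (d l) (\<kappa> l) j))
    = (if l \<in> S then of_bool (b l = b' l \<and> a l = a' l) else of_bool (b l = a l \<and> b' l = a' l))
      / (if l \<in> S then 1 else of_nat (d l))"
proof (cases "l \<in> S")
  case True
  then show ?thesis
    using gen_basis_complete[OF basis[OF l] \<kappa>_pos[OF l]] idx_less[OF _ l] a b a' b' by simp
next
  case False
  have "G l 0 x y = of_bool (x = y)" if "x < d l" "y < d l" for x y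
    using basis[OF l] that unfolding gen_basis_def by simp
  then show ?thesis using False idx_less[OF _ l] a b a' b' by (simp add: basis_sqnorm_def)
qed

lemma prod_if_one: "(\<Prod>m<N. if m \<in> S then 1 else f m) = (\<Prod>m\<in>{..<N} - S. f m)"
  by (simp add: prod.If_cases Diff_eq)

(* Completeness of the local bases for the parties in S, and G l 0 = I for the others. *)
lemma sum_supported_idx_kernel:
  assumes "a \<in> idx N d" "b \<in> idx N d" "a' \<in> idx N d" "b' \<in> idx N d"
  shows "(\<Sum>i\<in>supported_idx S. \<Prod>l<N. G l (i l) (b l) (a l) * cnj (G l (i l) (b' l) (a' l))
            / complex_of_real (basis_sqnorm (d l) (\<kappa> l) (i l)))
    = (\<Prod>m<N. if m \<in> S then of_bool (b m = b' m \<and> a m = a' m) else of_bool (b m = a m \<and> b' m = a' m))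
      / (\<Prod>m\<in>{..<N} - S. of_nat (d m))"
proof -
  have "(\<Sum>i\<in>supported_idx S. \<Prod>l<N. G l (i l) (b l) (a l) * cnj (G l (i l) (b' l) (a' l))
          / complex_of_real (basis_sqnorm (d l) (\<kappa> l) (i l)))
      = (\<Prod>l<N. \<Sum>j\<in>(if l \<in> S then {..<(d l)\<^sup>2} else {0}).
          G l j (b l) (a l) * cnj (G l j (b' l) (a' l)) / complex_of_real (basis_sqnorm (d l) (\<kappa> l) j))"
    unfolding supported_idx_def by (rule prod_sum_PiE[symmetric]) auto
  also have "\<dots> = (\<Prod>l<N. (if l \<in> S then of_bool (b l = b' l \<and> a l = a' l)
      else of_bool (b l = a l \<and> b' l = a' l)) / (if l \<in> S then 1 else of_nat (d l)))"
    using assms by (intro prod.cong refl sum_party_kernel) auto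
  finally show ?thesis unfolding prod_dividef prod_if_one .
qed

lemma sum_supported_idx:
  "(\<Sum>i\<in>supported_idx S. complex_of_real ((cmod (tr_basis \<rho> i))\<^sup>2 / basis_weight i))
     * (\<Prod>m\<in>{..<N} - S. of_nat (d m))
   = reduced_purity \<rho> S"
proof -
  let ?D = "\<Prod>m\<in>{..<N} - S. of_nat (d m) :: complex"
  have "(\<Sum>i\<in>supported_idx S. complex_of_real ((cmod (tr_basis \<rho> i))\<^sup>2 / basis_weight i))
      = (\<Sum>i\<in>supported_idx S. \<Sum>a\<in>idx N d. \<Sum>b\<in>idx N d. \<Sum>a'\<in>idx N d. \<Sum>b'\<in>idx N d.
           \<rho> a b * cnj (\<rho> a' b') * (\<Prod>l<N. G l (i l) (b l) (a l) * cnj (G l (i l) (b' l) (a' l))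
             / complex_of_real (basis_sqnorm (d l) (\<kappa> l) (i l))))"
    unfolding of_real_divide cmod_tr_basis_sq basis_weight_def of_real_prod
    by (simp add: sum_divide_distrib prod_dividef)
  also have "\<dots> = reduced_purity \<rho> S / ?D"
    unfolding sum_swap_outer4 reduced_purity_def sum_divide_distrib
    by (intro sum.cong refl) (simp add: sum_distrib_left[symmetric] sum_supported_idx_kernel)
  finally show ?thesis using dim_pos by (simp add: prod_pos)
qed

(* Exchanging the summation variables b and a' turns one sum into the other. *)
lemma reduced_purity_ket_bra_complement:
  "reduced_purity (ket_bra \<psi>) ({..<N} - S) = reduced_purity (ket_bra \<psi>) S"
proof -
  have \<delta>: "(\<Prod>m<N. if m \<in> {..<N} - S then of_bool (b m = b' m \<and> a m = a' m)
        else of_bool (b m = a m \<and> b' m = a' m))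
      = (\<Prod>m<N. if m \<in> S then of_bool (a' m = b' m \<and> a m = b m)
        else of_bool (a' m = a m \<and> b' m = b m) :: complex)" for a b a' b' :: "nat \<Rightarrow> nat"
    by (intro prod.cong) auto
  have "reduced_purity (ket_bra \<psi>) ({..<N} - S)
      = (\<Sum>a\<in>idx N d. \<Sum>b\<in>idx N d. \<Sum>a'\<in>idx N d. \<Sum>b'\<in>idx N d.
          ket_bra \<psi> a a' * cnj (ket_bra \<psi> b b') *
          (\<Prod>m<N. if m \<in> S then of_bool (a' m = b' m \<and> a m = b m) else of_bool (a' m = a m \<and> b' m = b m)))"
    unfolding reduced_purity_def ket_bra_def \<delta> by (simp add: mult_ac)
  also have "\<dots> = reduced_purity (ket_bra \<psi>) S"
    unfolding reduced_purity_def by (intro sum.cong refl sum.swap)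
  finally show ?thesis .
qed

lemma reduced_purity_empty:
  "reduced_purity \<rho> {} = (\<Sum>a\<in>idx N d. \<rho> a a) * cnj (\<Sum>a\<in>idx N d. \<rho> a a)"
proof -
  have \<delta>: "(\<Prod>m<N. of_bool (b m = a m \<and> b' m = a' m) :: complex) = of_bool (b = a) * of_bool (b' = a')"
    if "a \<in> idx N d" "b \<in> idx N d" "a' \<in> idx N d" "b' \<in> idx N d" for a b a' b'
    using idx_eq_iff[OF that(2,1)] idx_eq_iff[OF that(4,3)] by (auto simp: prod_of_bool)
  have "reduced_purity \<rho> {} = (\<Sum>a\<in>idx N d. \<Sum>b\<in>idx N d. of_bool (b = a) *
      (\<Sum>a'\<in>idx N d. \<Sum>b'\<in>idx N d. of_bool (b' = a') * (\<rho> a b * cnj (\<rho> a' b'))))"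
    unfolding reduced_purity_def sum_distrib_left by (intro sum.cong refl) (simp add: \<delta> mult_ac)
  also have "\<dots> = (\<Sum>a\<in>idx N d. \<Sum>a'\<in>idx N d. \<rho> a a * cnj (\<rho> a' a'))"
    by (simp add: sum_of_bool_delta finite_idx cong: sum.cong)
  finally show ?thesis by (simp add: sum_product cnj_sum)
qed

definition full_idx :: "(nat \<Rightarrow> nat) set" where
  "full_idx = PiE {..<N} (\<lambda>l. {..<(d l)\<^sup>2})"

definition party_support :: "(nat \<Rightarrow> nat) \<Rightarrow> nat set" where
  "party_support i = {l\<in>{..<N}. i l \<noteq> 0}"

definition pure_weight :: "((nat \<Rightarrow> nat) \<Rightarrow> complex) \<Rightarrow> (nat \<Rightarrow> nat) \<Rightarrow> real" where
  "pure_weight \<psi> i = (cmod (tr_basis (ket_bra \<psi>) i))\<^sup>2 / basis_weight i"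

definition sq_norm :: "((nat \<Rightarrow> nat) \<Rightarrow> complex) \<Rightarrow> real" where
  "sq_norm \<psi> = (\<Sum>a\<in>idx N d. (cmod (\<psi> a))\<^sup>2)"

lemma sq_norm_nonneg: "0 \<le> sq_norm \<psi>"
  unfolding sq_norm_def by (simp add: sum_nonneg)

lemma supported_idx_eq: "supported_idx S = {i \<in> full_idx. party_support i \<subseteq> S}"
proof (rule Set.set_eqI, rule iffI)
  fix i assume "i \<in> supported_idx S"
  then show "i \<in> {i \<in> full_idx. party_support i \<subseteq> S}"
    unfolding supported_idx_def full_idx_def party_support_def using dim_pos
    by (auto simp: PiE_iff split: if_splits)
next
  fix i assume "i \<in> {i \<in> full_idx. party_support i \<subseteq> S}"
  then show "i \<in> supported_idx S"
    unfolding supported_idx_def full_idx_def party_support_def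
    by (auto simp: PiE_iff)
qed

lemma trace_ket_bra: "(\<Sum>a\<in>idx N d. ket_bra \<psi> a a) = complex_of_real (sq_norm \<psi>)"
  unfolding sq_norm_def ket_bra_def of_real_sum
  by (intro sum.cong refl) (metis complex_norm_square of_real_power)

lemma support_weights_pure: "support_weights {..<N} full_idx party_support (pure_weight \<psi>)"
proof
  show "finite full_idx"
    unfolding full_idx_def by (simp add: finite_PiE)
  show "party_support i \<subseteq> {..<N}" for i
    unfolding party_support_def by auto
  show "0 \<le> pure_weight \<psi> i" for i
    unfolding pure_weight_def using basis_weight_pos[of i] by simp
qed simp

lemma mass_ket_bra:
  "complex_of_real (support_weights.mass full_idx party_support (pure_weight \<psi>) S
      * (\<Prod>m\<in>{..<N} - S. real (d m)))
    = reduced_purity (ket_bra \<psi>) S"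
  using sum_supported_idx[where S = S and \<rho> = "ket_bra \<psi>"]
  unfolding support_weights.mass_def[OF support_weights_pure] supported_idx_eq pure_weight_def by simp

lemma marginal_masses_pure:
  "marginal_masses {..<N} full_idx party_support (pure_weight \<psi>) (\<lambda>l. real (d l)) ((sq_norm \<psi>)\<^sup>2)"
proof -
  interpret support_weights "{..<N}" full_idx party_support "pure_weight \<psi>"
    by (rule support_weights_pure)
  note purity = mass_ket_bra[of \<psi>]
  have empty: "reduced_purity (ket_bra \<psi>) {} = complex_of_real ((sq_norm \<psi>)\<^sup>2)"
    unfolding reduced_purity_empty trace_ket_bra by (simp add: power2_eq_square)
  have dims_pos: "0 < (\<Prod>m\<in>A. real (d m))" if "A \<subseteq> {..<N}" for A
    using dim_pos that by (intro prod_pos) auto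
  show ?thesis
  proof unfold_locales
    have "complex_of_real (mass {..<N}) = complex_of_real ((sq_norm \<psi>)\<^sup>2)"
      using purity[of "{..<N}"] reduced_purity_ket_bra_complement[of \<psi> "{}"] empty by simp
    then show "mass {..<N} = (sq_norm \<psi>)\<^sup>2"
      by (simp only: of_real_eq_iff)
    have "complex_of_real (mass {} * (\<Prod>l<N. real (d l))) = complex_of_real ((sq_norm \<psi>)\<^sup>2)"
      using purity[of "{}"] empty by simp
    then have "mass {} * (\<Prod>l<N. real (d l)) = (sq_norm \<psi>)\<^sup>2"
      by (simp only: of_real_eq_iff)
    then show "mass {} = (sq_norm \<psi>)\<^sup>2 / (\<Prod>l<N. real (d l))"
      using dim_pos by (intro eq_divide_imp) auto
    fix l assume l: "l \<in> {..<N}"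
    have prod_split: "(\<Prod>m<N. real (d m)) = real (d l) * (\<Prod>m\<in>{..<N} - {l}. real (d m))"
      using l by (simp add: prod.remove)
    have "{..<N} - ({..<N} - {l}) = {l}" using l by auto
    then have "complex_of_real (mass ({..<N} - {l}) * real (d l))
        = complex_of_real (mass {l} * (\<Prod>m\<in>{..<N} - {l}. real (d m)))"
      using purity[of "{..<N} - {l}"] purity[of "{l}"] reduced_purity_ket_bra_complement[of \<psi> "{l}"]
      by simp
    then have "mass ({..<N} - {l}) * real (d l) = mass {l} * (\<Prod>m\<in>{..<N} - {l}. real (d m))"
      by (simp only: of_real_eq_iff)
    then show "mass ({..<N} - {l}) * (real (d l))\<^sup>2 = mass {l} * (\<Prod>l<N. real (d l))"
      unfolding prod_split by (simp add: power2_eq_square ac_simps)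
  qed (use dim_pos in auto)
qed

lemma corr_idx_eq: "corr_idx N d = {i \<in> full_idx. party_support i = {..<N}}"
proof (rule Set.set_eqI, rule iffI)
  fix i assume "i \<in> corr_idx N d"
  then have "\<forall>l\<in>{..<N}. 1 \<le> i l \<and> i l < (d l)\<^sup>2" "i \<in> extensional {..<N}"
    unfolding corr_idx_def PiE_iff by auto
  then show "i \<in> {i \<in> full_idx. party_support i = {..<N}}"
    unfolding full_idx_def party_support_def PiE_iff by force
next
  fix i assume i: "i \<in> {i \<in> full_idx. party_support i = {..<N}}"
  then have "\<forall>l\<in>{..<N}. i l < (d l)\<^sup>2" "i \<in> extensional {..<N}"
    unfolding full_idx_def PiE_iff by auto
  moreover have "i l \<noteq> 0" if "l < N" for l
    using i that unfolding party_support_def by blast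
  ultimately show "i \<in> corr_idx N d"
    unfolding corr_idx_def PiE_iff by (simp add: Suc_le_eq)
qed

lemma basis_weight_corr_idx:
  assumes "i \<in> corr_idx N d"
  shows "basis_weight i = (\<Prod>l<N. \<kappa> l)"
proof -
  have nonzero: "i l \<noteq> 0" if "l < N" for l
    using PiE_mem[OF assms[unfolded corr_idx_def], of l] that by auto
  show ?thesis
    unfolding basis_weight_def basis_sqnorm_def by (intro prod.cong refl) (simp add: nonzero)
qed

lemma frob_sq_corr_ket_bra:
  "frob_sq_corr N d \<kappa> G (ket_bra \<psi>)
    = (\<Prod>l<N. real (d l)) / (\<Prod>l<N. \<kappa> l) * ((\<Prod>l<N. real (d l)) * (\<Sum>i\<in>corr_idx N d. pure_weight \<psi> i))"
proof -
  let ?D = "\<Prod>l<N. real (d l)" and ?K = "\<Prod>l<N. \<kappa> l"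
  have K: "0 < ?K" using \<kappa>_pos by (intro prod_pos) auto
  have D: "0 < ?D" using dim_pos by (intro prod_pos) auto
  have "(cmod (corr_entry N d \<kappa> G (ket_bra \<psi>) i))\<^sup>2 = ?D / ?K * (?D * pure_weight \<psi> i)"
    if "i \<in> corr_idx N d" for i
  proof -
    have "corr_entry N d \<kappa> G (ket_bra \<psi>) i = complex_of_real (?D / ?K) * tr_basis (ket_bra \<psi>) i"
      unfolding corr_entry_def tr_basis_def ..
    then have "(cmod (corr_entry N d \<kappa> G (ket_bra \<psi>) i))\<^sup>2 = (?D / ?K)\<^sup>2 * (cmod (tr_basis (ket_bra \<psi>) i))\<^sup>2"
      by (simp only: norm_mult norm_of_real power_mult_distrib power2_abs)
    then show ?thesis
      unfolding pure_weight_def basis_weight_corr_idx[OF that] using K by (simp add: power2_eq_square)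
  qed
  then show ?thesis unfolding frob_sq_corr_def sum_distrib_left by (rule sum.cong[OF refl])
qed

lemma dim_sq_le_prod:
  assumes ratio: "1 \<le> (\<Prod>l<N. real (d l)) / (real (Max (d ` {..<N})))\<^sup>2" and l: "l < N"
  shows "(real (d l))\<^sup>2 \<le> (\<Prod>l<N. real (d l))"
proof -
  have dmax: "real (d l) \<le> real (Max (d ` {..<N}))" using l by (simp add: Max_ge)
  then have "(real (d l))\<^sup>2 \<le> (real (Max (d ` {..<N})))\<^sup>2" by (simp add: power_mono)
  also have "\<dots> \<le> (\<Prod>l<N. real (d l))"
    using ratio dmax dim_pos[OF l] by (simp add: le_divide_eq split: if_splits)
  finally show ?thesis .
qed

lemma full_mass_le_mbound_factor:
  assumes "marginal_masses {..<N} I supp x (\<lambda>l. real (d l)) q" and N: "1 \<le> N"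
  shows "(\<Prod>l<N. real (d l)) * support_weights.full_mass {..<N} I supp x \<le> mbound_factor N d * q"
proof -
  interpret marginal_masses "{..<N}" I supp x "\<lambda>l. real (d l)" q by fact
  show ?thesis
    using N full_mass_bound_empty full_mass_bound_delete full_mass_bound_delete_singleton[OF _ dim_sq_le_prod]
    unfolding mbound_factor_def Let_def by (auto simp: lessThan_empty_iff not_less)
qed

theorem pure_state_bound:
  assumes "1 \<le> N"
  shows "frob_sq_corr N d \<kappa> G (ket_bra \<psi>) \<le> mbound N d \<kappa> * (sq_norm \<psi>)\<^sup>2"
proof -
  interpret support_weights "{..<N}" full_idx party_support "pure_weight \<psi>"
    by (rule support_weights_pure)
  let ?D = "\<Prod>l<N. real (d l)" and ?K = "\<Prod>l<N. \<kappa> l"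
  have "0 \<le> ?D / ?K"
    using dim_pos \<kappa>_pos by (intro divide_nonneg_nonneg prod_nonneg) (auto intro: less_imp_le)
  have "frob_sq_corr N d \<kappa> G (ket_bra \<psi>) = ?D / ?K * (?D * full_mass)"
    unfolding frob_sq_corr_ket_bra full_mass_def corr_idx_eq by (rule refl)
  also have "\<dots> \<le> ?D / ?K * (mbound_factor N d * (sq_norm \<psi>)\<^sup>2)"
    using full_mass_le_mbound_factor[OF marginal_masses_pure assms] \<open>0 \<le> ?D / ?K\<close>
    by (rule mult_left_mono)
  also have "\<dots> = mbound N d \<kappa> * (sq_norm \<psi>)\<^sup>2"
    unfolding mbound_eq by simp
  finally show ?thesis .
qed

end

section \<open>Mixed states\<close>

lemma corr_entry_sum:
  assumes "finite K" and decomp: "\<forall>a\<in>idx N d. \<forall>b\<in>idx N d. \<rho> a b = (\<Sum>k\<in>K. \<sigma> k a b)"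
  shows "corr_entry N d \<kappa> G \<rho> i = (\<Sum>k\<in>K. corr_entry N d \<kappa> G (\<sigma> k) i)"
proof -
  let ?g = "\<lambda>a b. \<Prod>l<N. G l (i l) (b l) (a l)"
  have "(\<Sum>a\<in>idx N d. \<Sum>b\<in>idx N d. \<rho> a b * ?g a b)
      = (\<Sum>a\<in>idx N d. \<Sum>b\<in>idx N d. \<Sum>k\<in>K. \<sigma> k a b * ?g a b)"
    using decomp by (intro sum.cong refl) (simp add: sum_distrib_right)
  also have "\<dots> = (\<Sum>a\<in>idx N d. \<Sum>k\<in>K. \<Sum>b\<in>idx N d. \<sigma> k a b * ?g a b)"
    by (rule sum.cong[OF refl], rule sum.swap)
  also have "\<dots> = (\<Sum>k\<in>K. \<Sum>a\<in>idx N d. \<Sum>b\<in>idx N d. \<sigma> k a b * ?g a b)"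
    by (rule sum.swap)
  finally show ?thesis unfolding corr_entry_def by (simp add: sum_distrib_left)
qed

theorem lemma2:
  fixes N :: nat and d :: "nat \<Rightarrow> nat" and \<kappa> :: "nat \<Rightarrow> real"
    and G :: "nat \<Rightarrow> nat \<Rightarrow> nat \<Rightarrow> nat \<Rightarrow> complex"
    and \<rho> :: "(nat \<Rightarrow> nat) \<Rightarrow> (nat \<Rightarrow> nat) \<Rightarrow> complex"
  assumes "N \<ge> 1"
    and "\<forall>l<N. d l > 0"
    and "\<forall>l<N. \<kappa> l \<ge> 1"
    and "\<forall>l<N. gen_basis (d l) (\<kappa> l) (G l)"
    and "quantum_state N d \<rho>"
  shows "frob_sq_corr N d \<kappa> G \<rho> \<le> mbound N d \<kappa>"
proof -
  interpret product_basis N d \<kappa> G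
    using assms(2-4) by unfold_locales (auto intro: less_le_trans[OF zero_less_one])
  have psd: "psd (idx N d) \<rho>" and trace: "(\<Sum>a\<in>idx N d. \<rho> a a) = 1"
    using assms(5) unfolding quantum_state_def psd_def quad_form_def Let_def by auto
  obtain w where w: "\<forall>a\<in>idx N d. \<forall>b\<in>idx N d. \<rho> a b = (\<Sum>k\<in>idx N d. ket_bra (w k) a b)"
    using psd_gram_decomposition[OF finite_idx psd] unfolding ket_bra_def by blast
  have "complex_of_real (\<Sum>k\<in>idx N d. sq_norm (w k)) = (\<Sum>a\<in>idx N d. \<rho> a a)"
    unfolding of_real_sum trace_ket_bra[symmetric] using w by (subst sum.swap) simp
  then have weights: "(\<Sum>k\<in>idx N d. sq_norm (w k)) = 1"
    unfolding trace of_real_eq_1_iff .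
  show ?thesis
    unfolding frob_sq_corr_def corr_entry_sum[OF finite_idx w]
    using pure_state_bound[OF assms(1)] weights
    by (intro sum_sq_norm_convex_bound finite_idx) (auto simp: frob_sq_corr_def sq_norm_nonneg)
qed

end
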